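(* Let $R$ be a ring such that the polynomial ring $R[t]$ in one indeterminate is Cohen-Macaulay. Then $R$ is Cohen-Macaulay.
   Context: All rings are commutative with identity. For $x\in R$ let $C(x)$ be the complex $0\to R\to R_x\to 0$ ($R$ in degree $0$, natural localization map); for a finite sequence $\mathbf x=x_1,\dots,x_\ell$ put $C(\mathbf x)=C(x_1)\otimes_R\cdots\otimes_R C(x_\ell)$ and let $H^i_{\mathbf x}(M)$ be the $i$th cohomology of $C(\mathbf x)\otimes_R M$; $\ell(\mathbf x)=\ell$. Let $K(x)$ be $0\to R\xrightarrow{x}R\to 0$ (degrees $1,0$), $K(\mathbf x)=K(x_1)\otimes\cdots\otimes K(x_\ell)$, $H_i(\mathbf x)$ its homology. For $m\ge n$ the chain map $K(\mathbf x^m)\to K(\mathbf x^n)$ ($\mathbf x^m=x_1^m,\dots,x_\ell^m$) is the tensor product of the maps $K(x_i^m)\to K(x_i^n)$ given by multiplication by $x_i^{m-n}$ in degree $1$ and identity in degree $0$. $\mathbf x$ is weakly proregular if for every $n$ there is $m\ge n$ with $H_i(\mathbf x^m)\to H_i(\mathbf x^n)$ zero for all $i\ge1$. $\mathbf x$ is a parameter sequence on $R$ if it is weakly proregular, $(\mathbf x)R\neq R$, and $H^{\ell(\mathbf x)}_{\mathbf x}(R)_p\neq0$ for every prime $p\supseteq(\mathbf x)R$ (the empty sequence is a parameter sequence). It is a strong parameter sequence if $x_1,\dots,x_i$ is a parameter sequence for each $i=1,\dots,\ell(\mathbf x)$. A regular sequence on $M$: each $x_i$ is a non-zero-divisor on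 $M/(x_1,\dots,x_{i-1})M$ and $M\neq(\mathbf x)M$. A ring $R$ is Cohen-Macaulay if every strong parameter sequence on $R$ is a regular sequence on $R$. *)

theory Defs
  imports "HOL-Computational_Algebra.Polynomial"
begin

text \<open>A finite sequence x_1,...,x_l in R is a list xs (x_{i+1} = xs!i).
  The ideal (x)R generated by the sequence.\<close>
definition gen_ideal :: "'a::comm_ring_1 list \<Rightarrow> 'a set" where
  "gen_ideal xs = {r. \<exists>c. r = (\<Sum>i<length xs. c i * xs ! i)}"

definition prime_ideal :: "'a::comm_ring_1 set \<Rightarrow> bool" where
  "prime_ideal P \<longleftrightarrow> 0 \<in> P \<and> (\<forall>a\<in>P. \<forall>b\<in>P. a + b \<in> P) \<and>
     (\<forall>a\<in>P. \<forall>r. r * a \<in> P) \<and> 1 \<notin> P \<and> (\<forall>a b. a * b \<in> P \<longrightarrow> a \<in> P \<or> b \<in> P)"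

text \<open>Koszul complex K(x) = K(x_1) \<otimes> ... \<otimes> K(x_l): the degree-i module is free on the
  basis e_S, S a subset of {0..<l} with card S = i.\<close>
definition koszul_chain :: "'a::comm_ring_1 list \<Rightarrow> nat \<Rightarrow> (nat set \<Rightarrow> 'a) \<Rightarrow> bool" where
  "koszul_chain xs i c \<longleftrightarrow> (\<forall>S. c S \<noteq> 0 \<longrightarrow> S \<subseteq> {..<length xs} \<and> card S = i)"

text \<open>Differential: d(e_S) = sum over j in S of (-1)^(#{k in S. k < j}) x_j e_(S - {j}).\<close>
definition koszul_d :: "'a::comm_ring_1 list \<Rightarrow> (nat set \<Rightarrow> 'a) \<Rightarrow> (nat set \<Rightarrow> 'a)" where
  "koszul_d xs c = (\<lambda>T. \<Sum>j\<in>{..<length xs} - T.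
       (-1) ^ card {k\<in>T. k < j} * xs ! j * c (insert j T))"

definition pow_seq :: "'a::comm_ring_1 list \<Rightarrow> nat \<Rightarrow> 'a list" where
  "pow_seq xs m = map (\<lambda>x. x ^ m) xs"

text \<open>The chain map K(x^m) -> K(x^n), tensor product of (x_j^(m-n) in degree 1, id in degree 0):
  e_S |-> (prod_{j in S} x_j^(m-n)) e_S.\<close>
definition koszul_map :: "'a::comm_ring_1 list \<Rightarrow> nat \<Rightarrow> nat \<Rightarrow> (nat set \<Rightarrow> 'a) \<Rightarrow> (nat set \<Rightarrow> 'a)" where
  "koszul_map xs m n c = (\<lambda>S. (\<Prod>j\<in>S. (xs ! j) ^ (m - n)) * c S)"

text \<open>Weak proregularity: the induced maps H_i(x^m) -> H_i(x^n), i >= 1, are zero, i.e.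
  every i-cycle of K(x^m) is mapped to an i-boundary of K(x^n).\<close>
definition weakly_proregular :: "'a::comm_ring_1 list \<Rightarrow> bool" where
  "weakly_proregular xs \<longleftrightarrow> (\<forall>n. \<exists>m\<ge>n. \<forall>i\<ge>1. \<forall>c.
      koszul_chain (pow_seq xs m) i c \<and> koszul_d (pow_seq xs m) c = (\<lambda>_. 0) \<longrightarrow>
      (\<exists>b. koszul_chain (pow_seq xs n) (Suc i) b \<and>
           koszul_d (pow_seq xs n) b = koszul_map xs m n c))"

text \<open>Top Cech cohomology H^l_x(R): cokernel of the last differential of C(x)
  (degree l-1 component: direct sum over i of R_{y_i}, y_i = product of x_j, j ~= i;
   degree l component: R_{x_1} \<otimes> ... \<otimes> R_{x_l} = R_y, y = x_1 ... x_l).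
  An element of R_y is written r / y^k; (r,k) and (r',k') are equal iff
  y^N (r y^k' - r' y^k) = 0 for some N. The localisation map R_{y_i} -> R_y sends
  a / y_i^K to a x_i^K / y^K. Hence the class of r / y^k in H^l is zero iff:\<close>
definition cech_top_zero :: "'a::comm_ring_1 list \<Rightarrow> 'a \<Rightarrow> nat \<Rightarrow> bool" where
  "cech_top_zero xs r k \<longleftrightarrow> (\<exists>N K a. (prod_list xs) ^ N *
      (r * (prod_list xs) ^ K - (\<Sum>i<length xs. a i * (xs ! i) ^ K) * (prod_list xs) ^ k) = 0)"

text \<open>H^l_x(R)_P \<noteq> 0: some element of H^l_x(R) is not killed by any s outside P.\<close>
definition cech_top_loc_nonzero :: "'a::comm_ring_1 list \<Rightarrow> 'a set \<Rightarrow> bool" where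
  "cech_top_loc_nonzero xs P \<longleftrightarrow> (\<exists>r k. \<forall>s. s \<notin> P \<longrightarrow> \<not> cech_top_zero xs (s * r) k)"

definition parameter_seq :: "'a::comm_ring_1 list \<Rightarrow> bool" where
  "parameter_seq xs \<longleftrightarrow> weakly_proregular xs \<and> gen_ideal xs \<noteq> UNIV \<and>
     (\<forall>P. prime_ideal P \<and> gen_ideal xs \<subseteq> P \<longrightarrow> cech_top_loc_nonzero xs P)"

definition strong_parameter_seq :: "'a::comm_ring_1 list \<Rightarrow> bool" where
  "strong_parameter_seq xs \<longleftrightarrow> (\<forall>i\<in>{1..length xs}. parameter_seq (take i xs))"

definition regular_seq :: "'a::comm_ring_1 list \<Rightarrow> bool" where
  "regular_seq xs \<longleftrightarrow> (\<forall>i<length xs. \<forall>r. xs ! i * r \<in> gen_ideal (take i xs) \<longrightarrow>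
       r \<in> gen_ideal (take i xs)) \<and> gen_ideal xs \<noteq> UNIV"

definition cohen_macaulay :: "'a::comm_ring_1 itself \<Rightarrow> bool" where
  "cohen_macaulay _ \<longleftrightarrow> (\<forall>xs :: 'a list. strong_parameter_seq xs \<longrightarrow> regular_seq xs)"

end

theory Submission
  imports Defs
begin

text \<open>
  Extend scalars along R \<rightarrow> R[t] and compare a sequence x in R with the sequence of constant
  polynomials x in R[t]. Since R[t] is free over R on the monomials t^j, everything in the
  definitions decomposes coefficientwise: Koszul chains, cycles and boundaries over R[t] are
  exactly families of those over R of bounded degree, and a Cech relation over R[t] yields one
  over R in every coefficient. For a prime P of R[t], its contraction {a. [:a:] \<in> P} is a prime
  of R, and every s \<notin> P has a coefficient outside the contraction, so non-vanishing of the
  localised top Cech cohomology ascends. Hence strong parameter sequences on R stay so on R[t],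
  where they are regular by hypothesis; regularity descends, because a membership
  x_i r \<in> (x_1, ..., x_(i-1)) between constants can be read off in coefficient 0.
\<close>

abbreviation const_poly_seq :: "'a::comm_ring_1 list \<Rightarrow> 'a poly list" where
  "const_poly_seq xs \<equiv> map (\<lambda>x. [:x:]) xs"

abbreviation coeff_chain :: "(nat set \<Rightarrow> 'a::zero poly) \<Rightarrow> nat \<Rightarrow> nat set \<Rightarrow> 'a" where
  "coeff_chain c j \<equiv> \<lambda>S. coeff (c S) j"

lemma gen_ideal_mult_closed: "a \<in> gen_ideal xs \<Longrightarrow> r * a \<in> gen_ideal xs"
proof -
  assume "a \<in> gen_ideal xs"
  then obtain c where "a = (\<Sum>i<length xs. c i * xs ! i)" by (auto simp: gen_ideal_def)
  then have "r * a = (\<Sum>i<length xs. (r * c i) * xs ! i)"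
    by (simp add: sum_distrib_left mult.assoc)
  then show ?thesis by (auto simp: gen_ideal_def)
qed

lemma gen_ideal_eq_UNIV_iff: "gen_ideal xs = UNIV \<longleftrightarrow> 1 \<in> gen_ideal xs"
  using gen_ideal_mult_closed[of 1 xs] by auto

lemma coeff_in_gen_ideal_const_poly_seq:
  assumes "p \<in> gen_ideal (const_poly_seq xs)"
  shows "coeff p j \<in> gen_ideal xs"
proof -
  obtain c where "p = (\<Sum>i<length xs. c i * [:xs ! i:])"
    using assms by (auto simp: gen_ideal_def)
  then have "coeff p j = (\<Sum>i<length xs. coeff (c i) j * xs ! i)"
    by (simp add: coeff_sum mult.commute)
  then show ?thesis by (auto simp: gen_ideal_def)
qed

lemma const_in_gen_ideal_const_poly_seq_iff:
  "[:a:] \<in> gen_ideal (const_poly_seq xs) \<longleftrightarrow> a \<in> gen_ideal xs"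
proof
  assume "a \<in> gen_ideal xs"
  then obtain c where "a = (\<Sum>i<length xs. c i * xs ! i)" by (auto simp: gen_ideal_def)
  then have "[:a:] = (\<Sum>i<length xs. [:c i:] * const_poly_seq xs ! i)"
    by (simp add: sum_to_poly mult.commute)
  then show "[:a:] \<in> gen_ideal (const_poly_seq xs)"
    unfolding gen_ideal_def length_map mem_Collect_eq by (rule exI[of _ "\<lambda>i. [:c i:]"])
qed (use coeff_in_gen_ideal_const_poly_seq[of "[:a:]" xs 0] in simp)

lemma gen_ideal_const_poly_seq_eq_UNIV_iff:
  "gen_ideal (const_poly_seq xs) = UNIV \<longleftrightarrow> gen_ideal xs = UNIV"
  using const_in_gen_ideal_const_poly_seq_iff[of 1 xs]
  by (simp add: gen_ideal_eq_UNIV_iff one_pCons)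

lemma pow_seq_const_poly_seq: "pow_seq (const_poly_seq xs) m = const_poly_seq (pow_seq xs m)"
  by (simp add: pow_seq_def poly_const_pow)

lemma koszul_chain_const_poly_seq_iff:
  "koszul_chain (const_poly_seq xs) i c \<longleftrightarrow> (\<forall>j. koszul_chain xs i (coeff_chain c j))"
  unfolding koszul_chain_def by (metis coeff_0 length_map poly_eqI)

lemma coeff_koszul_d_const_poly_seq:
  "coeff (koszul_d (const_poly_seq xs) c T) j = koszul_d xs (coeff_chain c j) T"
proof -
  have "(-1::'a poly) = [:-1:]"
    by (simp add: one_pCons)
  then have "(-1::'a poly) ^ k = [:(-1) ^ k:]" for k
    by (simp add: poly_const_pow)
  then show ?thesis
    unfolding koszul_d_def coeff_sum by (simp add: algebra_simps)
qed

lemma koszul_d_const_poly_seq_eq_iff: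
  "koszul_d (const_poly_seq xs) b = f \<longleftrightarrow> (\<forall>j. koszul_d xs (coeff_chain b j) = coeff_chain f j)"
  by (auto simp: fun_eq_iff poly_eq_iff coeff_koszul_d_const_poly_seq)

lemma coeff_koszul_map_const_poly_seq:
  assumes "\<forall>S. c S \<noteq> 0 \<longrightarrow> S \<subseteq> {..<length xs}"
  shows "coeff_chain (koszul_map (const_poly_seq xs) m n c) j = koszul_map xs m n (coeff_chain c j)"
proof
  fix S
  show "coeff (koszul_map (const_poly_seq xs) m n c S) j = koszul_map xs m n (coeff_chain c j) S"
  proof (cases "c S = 0")
    case False
    then have "S \<subseteq> {..<length xs}"
      using assms by blast
    then have "(\<Prod>i\<in>S. const_poly_seq xs ! i ^ (m - n)) = [:\<Prod>i\<in>S. xs ! i ^ (m - n):]"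
      by (auto simp: poly_const_pow prod_to_poly[symmetric] intro!: prod.cong)
    then show ?thesis by (simp add: koszul_map_def)
  qed (simp add: koszul_map_def)
qed

lemma degree_bounded_if_finite_support:
  fixes f :: "'b \<Rightarrow> 'a::zero poly"
  assumes "finite {S. f S \<noteq> 0}"
  obtains D where "\<And>S. degree (f S) \<le> D"
proof
  fix S
  show "degree (f S) \<le> Max (insert 0 ((\<lambda>S. degree (f S)) ` {S. f S \<noteq> 0}))"
    using assms by (cases "f S = 0") (auto intro: Max_ge)
qed

lemma koszul_boundary_const_poly_seq_if_coeff_boundaries:
  assumes "finite {S. f S \<noteq> 0}"
    and "\<And>j. \<exists>b. koszul_chain xs (Suc i) b \<and> koszul_d xs b = coeff_chain f j"
  shows "\<exists>b. koszul_chain (const_poly_seq xs) (Suc i) b \<and> koszul_d (const_poly_seq xs) b = f"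
proof -
  obtain D where D: "\<And>S. degree (f S) \<le> D"
    using degree_bounded_if_finite_support assms(1) by blast
  obtain B where B: "\<And>j. koszul_chain xs (Suc i) (B j)" "\<And>j. koszul_d xs (B j) = coeff_chain f j"
    using assms(2) by metis
  \<comment> \<open>Truncating at D makes each b S a polynomial; above D the coefficients of f vanish,
    so 0 is a valid preimage there.\<close>
  define B' where "B' j = (if j \<le> D then B j else (\<lambda>_. 0))" for j
  define b where "b S = Abs_poly (\<lambda>j. B' j S)" for S
  have coeff_b: "coeff_chain b j = B' j" for j
    unfolding b_def by (subst coeff_Abs_poly[of D]) (auto simp: B'_def)
  have "koszul_d xs (B' j) = coeff_chain f j" for j
  proof (cases "j \<le> D")
    case False
    then have "coeff_chain f j = (\<lambda>_. 0)"
      using D by (intro ext coeff_eq_0) (meson le_trans not_le)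
    with False show ?thesis by (simp add: B'_def koszul_d_def)
  qed (simp add: B'_def B(2))
  moreover have "koszul_chain xs (Suc i) (B' j)" for j
    using B(1) by (simp add: B'_def koszul_chain_def)
  ultimately show ?thesis
    by (metis coeff_b koszul_chain_const_poly_seq_iff koszul_d_const_poly_seq_eq_iff)
qed

lemma koszul_map_const_poly_seq_cycle_to_boundary:
  assumes cycle_to_boundary: "\<And>c. koszul_chain (pow_seq xs m) i c \<Longrightarrow>
      koszul_d (pow_seq xs m) c = (\<lambda>_. 0) \<Longrightarrow>
      \<exists>b. koszul_chain (pow_seq xs n) (Suc i) b \<and> koszul_d (pow_seq xs n) b = koszul_map xs m n c"
    and chain: "koszul_chain (const_poly_seq (pow_seq xs m)) i c"
    and cycle: "koszul_d (const_poly_seq (pow_seq xs m)) c = (\<lambda>_. 0)"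
  shows "\<exists>b. koszul_chain (const_poly_seq (pow_seq xs n)) (Suc i) b \<and>
      koszul_d (const_poly_seq (pow_seq xs n)) b = koszul_map (const_poly_seq xs) m n c"
proof (rule koszul_boundary_const_poly_seq_if_coeff_boundaries)
  have supp: "\<forall>S. c S \<noteq> 0 \<longrightarrow> S \<subseteq> {..<length xs}"
    using chain by (simp add: koszul_chain_def pow_seq_def)
  have "{S. koszul_map (const_poly_seq xs) m n c S \<noteq> 0} \<subseteq> {S. c S \<noteq> 0}"
    by (auto simp: koszul_map_def)
  also have "\<dots> \<subseteq> Pow {..<length xs}"
    using supp by blast
  finally show "finite {S. koszul_map (const_poly_seq xs) m n c S \<noteq> 0}"
    by (rule finite_subset) simp
  fix j
  have "koszul_chain (pow_seq xs m) i (coeff_chain c j)"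
    using chain koszul_chain_const_poly_seq_iff by blast
  moreover have "koszul_d (pow_seq xs m) (coeff_chain c j) = (\<lambda>_. 0)"
    using cycle koszul_d_const_poly_seq_eq_iff[of "pow_seq xs m" c "\<lambda>_. 0"] by simp
  ultimately show "\<exists>b. koszul_chain (pow_seq xs n) (Suc i) b \<and>
      koszul_d (pow_seq xs n) b = coeff_chain (koszul_map (const_poly_seq xs) m n c) j"
    using cycle_to_boundary by (simp add: coeff_koszul_map_const_poly_seq[OF supp])
qed

lemma weakly_proregular_const_poly_seq:
  "weakly_proregular xs \<Longrightarrow> weakly_proregular (const_poly_seq xs)"
  unfolding weakly_proregular_def pow_seq_const_poly_seq
  by (blast intro: koszul_map_const_poly_seq_cycle_to_boundary)

lemma prime_ideal_sum_closed:
  assumes "prime_ideal P" "\<And>i. i \<in> A \<Longrightarrow> f i \<in> P"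
  shows "sum f A \<in> P"
  using assms(2)
  by (induction A rule: infinite_finite_induct) (use assms(1) in \<open>auto simp: prime_ideal_def\<close>)

lemma prime_ideal_const_poly_preimage:
  assumes "prime_ideal (P :: 'a::comm_ring_1 poly set)"
  shows "prime_ideal {a. [:a:] \<in> P}"
proof -
  have hom: "[:a + b:] = [:a:] + [:b:]" "[:a * b:] = [:a:] * [:b:]" for a b :: 'a
    by simp_all
  show ?thesis
    using assms unfolding prime_ideal_def mem_Collect_eq
    by (simp only: hom pCons_0_0 flip: one_pCons) blast
qed

lemma ex_const_coeff_not_in_prime_ideal:
  assumes "prime_ideal (P :: 'a::comm_ring_1 poly set)" "s \<notin> P"
  shows "\<exists>j. [:coeff s j:] \<notin> P"
proof (rule ccontr)
  assume "\<nexists>j. [:coeff s j:] \<notin> P"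
  then have "monom 1 i * [:coeff s i:] \<in> P" for i
    using assms(1) unfolding prime_ideal_def by blast
  then have "(\<Sum>i\<le>degree s. monom (coeff s i) i) \<in> P"
    by (intro prime_ideal_sum_closed[OF assms(1)]) (simp add: smult_monom mult.commute)
  with assms(2) show False
    by (simp add: poly_as_sum_of_monoms)
qed

lemma cech_top_zero_coeff_if_const_poly_seq:
  assumes "cech_top_zero (const_poly_seq xs) (s * [:r:]) k"
  shows "cech_top_zero xs (coeff s j * r) k"
proof -
  let ?y = "prod_list xs"
  have prod_list_const: "prod_list (const_poly_seq xs) = [:?y:]"
    by (induction xs) (auto simp: one_pCons)
  obtain N K a where "[:?y:] ^ N *
      (s * [:r:] * [:?y:] ^ K - (\<Sum>i<length xs. a i * [:xs ! i:] ^ K) * [:?y:] ^ k) = 0"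
    using assms unfolding cech_top_zero_def prod_list_const by auto
  moreover define q where "q = (\<Sum>i<length xs. smult (xs ! i ^ K) (a i))"
  ultimately have "smult (?y ^ N) (smult (r * ?y ^ K) s - smult (?y ^ k) q) = 0"
    by (simp add: poly_const_pow mult.commute mult.left_commute)
  then have "coeff (smult (?y ^ N) (smult (r * ?y ^ K) s - smult (?y ^ k) q)) j = 0"
    by simp
  then have "?y ^ N * (coeff s j * r * ?y ^ K - (\<Sum>i<length xs. coeff (a i) j * xs ! i ^ K) * ?y ^ k) = 0"
    unfolding q_def by (simp add: coeff_sum algebra_simps sum_distrib_left)
  then show ?thesis
    unfolding cech_top_zero_def by (intro exI[of _ N] exI[of _ K] exI[of _ "\<lambda>i. coeff (a i) j"])
qed

lemma cech_top_loc_nonzero_const_poly_seq: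
  assumes "prime_ideal P" "cech_top_loc_nonzero xs {a. [:a:] \<in> P}"
  shows "cech_top_loc_nonzero (const_poly_seq xs) P"
proof -
  obtain r k where nonzero: "\<And>a. [:a:] \<notin> P \<Longrightarrow> \<not> cech_top_zero xs (a * r) k"
    using assms(2) unfolding cech_top_loc_nonzero_def by auto
  have "\<not> cech_top_zero (const_poly_seq xs) (s * [:r:]) k" if s: "s \<notin> P" for s
  proof
    assume "cech_top_zero (const_poly_seq xs) (s * [:r:]) k"
    then have "cech_top_zero xs (coeff s j * r) k" for j
      by (rule cech_top_zero_coeff_if_const_poly_seq)
    moreover obtain j where "[:coeff s j:] \<notin> P"
      using ex_const_coeff_not_in_prime_ideal[OF assms(1) s] ..
    ultimately show False
      using nonzero by blast
  qed
  then show ?thesis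
    unfolding cech_top_loc_nonzero_def by blast
qed

lemma parameter_seq_const_poly_seq:
  assumes "parameter_seq xs"
  shows "parameter_seq (const_poly_seq xs)"
proof -
  have wpr: "weakly_proregular xs" and proper: "gen_ideal xs \<noteq> UNIV"
    and top_nonzero: "\<And>Q. prime_ideal Q \<Longrightarrow> gen_ideal xs \<subseteq> Q \<Longrightarrow> cech_top_loc_nonzero xs Q"
    using assms unfolding parameter_seq_def by auto
  have "cech_top_loc_nonzero (const_poly_seq xs) P"
    if "prime_ideal P" and "gen_ideal (const_poly_seq xs) \<subseteq> P" for P
  proof (rule cech_top_loc_nonzero_const_poly_seq[OF \<open>prime_ideal P\<close>], rule top_nonzero)
    show "prime_ideal {a. [:a:] \<in> P}"
      using \<open>prime_ideal P\<close> by (rule prime_ideal_const_poly_preimage)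
    show "gen_ideal xs \<subseteq> {a. [:a:] \<in> P}"
      using \<open>gen_ideal (const_poly_seq xs) \<subseteq> P\<close> const_in_gen_ideal_const_poly_seq_iff by blast
  qed
  with wpr proper show ?thesis
    unfolding parameter_seq_def
    by (simp add: weakly_proregular_const_poly_seq gen_ideal_const_poly_seq_eq_UNIV_iff)
qed

lemma strong_parameter_seq_const_poly_seq:
  "strong_parameter_seq xs \<Longrightarrow> strong_parameter_seq (const_poly_seq xs)"
  unfolding strong_parameter_seq_def by (auto simp: take_map intro: parameter_seq_const_poly_seq)

lemma regular_seq_of_const_poly_seq:
  assumes "regular_seq (const_poly_seq xs)"
  shows "regular_seq xs"
  unfolding regular_seq_def
proof (intro conjI allI impI)
  show "gen_ideal xs \<noteq> UNIV"
    using assms gen_ideal_const_poly_seq_eq_UNIV_iff regular_seq_def by blast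
  fix i r
  assume "i < length xs" and "xs ! i * r \<in> gen_ideal (take i xs)"
  then have "[:xs ! i * r:] \<in> gen_ideal (take i (const_poly_seq xs))"
    by (simp add: take_map const_in_gen_ideal_const_poly_seq_iff del: mult_pCons_left mult_pCons_right)
  moreover have "[:xs ! i * r:] = const_poly_seq xs ! i * [:r:]"
    using \<open>i < length xs\<close> by simp
  ultimately have "const_poly_seq xs ! i * [:r:] \<in> gen_ideal (take i (const_poly_seq xs))"
    by simp
  moreover have "\<forall>i<length xs. \<forall>p. const_poly_seq xs ! i * p \<in> gen_ideal (take i (const_poly_seq xs)) \<longrightarrow>
      p \<in> gen_ideal (take i (const_poly_seq xs))"
    using assms unfolding regular_seq_def length_map by (rule conjunct1)
  ultimately have "[:r:] \<in> gen_ideal (take i (const_poly_seq xs))"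
    using \<open>i < length xs\<close> by blast
  then show "r \<in> gen_ideal (take i xs)"
    by (simp add: take_map const_in_gen_ideal_const_poly_seq_iff)
qed

theorem corollary4p6:
  assumes "cohen_macaulay TYPE('a::comm_ring_1 poly)"
  shows "cohen_macaulay TYPE('a)"
  unfolding cohen_macaulay_def
proof (intro allI impI)
  fix xs :: "'a list"
  assume "strong_parameter_seq xs"
  then have "strong_parameter_seq (const_poly_seq xs)"
    by (rule strong_parameter_seq_const_poly_seq)
  then have "regular_seq (const_poly_seq xs)"
    using assms unfolding cohen_macaulay_def by simp
  then show "regular_seq xs"
    by (rule regular_seq_of_const_poly_seq)
qed

end
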